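(* For any integers $d\ge2$ and $K\ge2$, $$\left[\frac{\sqrt\pi}{K}\frac{\Gamma(\frac{d+1}{2})}{\Gamma(\frac d2+1)}\right]^{\frac{1}{d-1}}\le\max_{\mathbf W\in\mathrm{OB}(d,K)}\rho_{\text{one-vs-one}}(\mathbf W).$$
   Context: $\mathrm{OB}(d,K)$ is the set of real $d\times K$ matrices with unit-norm columns $\mathbf w_1,\dots,\mathbf w_K$; $\rho_{\text{one-vs-one}}(\mathbf W)=\min_k\min_{k'\ne k}\|\mathbf w_k-\mathbf w_{k'}\|_2$. $\Gamma$ is the Gamma function. *)

theory Defs
  imports "HOL-Analysis.Analysis"
begin

text \<open>A real d x K matrix is represented by its columns: W k is the k-th column
  (k < K), and W k i is its i-th entry (i < d). Entries outside the index range
  are required to be 0, so that OB d K is a set of genuine d x K matrices.\<close>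

definition col_norm :: "nat \<Rightarrow> (nat \<Rightarrow> real) \<Rightarrow> real" where
  "col_norm d v = sqrt (\<Sum>i<d. (v i)\<^sup>2)"

definition OB :: "nat \<Rightarrow> nat \<Rightarrow> (nat \<Rightarrow> nat \<Rightarrow> real) set" where
  "OB d K = {W. (\<forall>k<K. col_norm d (W k) = 1) \<and>
                (\<forall>k i. K \<le> k \<or> d \<le> i \<longrightarrow> W k i = 0)}"

definition rho_ovo :: "nat \<Rightarrow> nat \<Rightarrow> (nat \<Rightarrow> nat \<Rightarrow> real) \<Rightarrow> real" where
  "rho_ovo d K W = Min {col_norm d (\<lambda>i. W k i - W k' i) | k k'. k < K \<and> k' < K \<and> k \<noteq> k'}"

end

theory Submission
  imports Defs
begin

(*
  As long as K delta^n <= r^n, fewer than K balls of radius delta cannot cover a ball of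
  radius r in R^n (compare volumes), so K points of the r-ball with pairwise distances
  >= delta can be chosen greedily.  Lifting such points vertically onto the upper unit
  hemisphere in R^(n+1) does not decrease distances.  The constant of the theorem is
  V_d / V_(d-1), the ratio of the volumes of the unit balls; with n = d - 1 and
  delta^n = V_d / (K V_(d-1)) the points fit into the unit ball when V_d <= V_(d-1),
  i.e. d >= 6.  For d <= 5 and K > 2d the points are split between both hemispheres,
  each half packed into the ball of radius sqrt(1 - delta^2/4), so that points on
  opposite hemispheres are delta apart; for K <= 2d the vectors +-e_i are already at
  distance >= 1 > delta.  Finally OB(d,K) is compact and the separation is continuous,
  so its maximum is attained.
*)

section \<open>Ratios of unit ball volumes\<close>

definition vol_ratio :: "nat \<Rightarrow> real" where
  "vol_ratio d = sqrt pi * (Gamma ((real d + 1) / 2) / Gamma (real d / 2 + 1))"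

lemma Gamma_plus1_pos: "x > 0 \<Longrightarrow> Gamma (x + 1) = x * Gamma (x::real)"
  using Gamma_plus1[of x] nonpos_Ints_nonpos[of x] by force

lemma vol_ratio_pos: "vol_ratio d > 0"
  unfolding vol_ratio_def by (intro mult_pos_pos divide_pos_pos Gamma_real_pos) auto

lemma vol_ratio_Suc_Suc: "vol_ratio (Suc (Suc d)) = vol_ratio d * ((real d + 1) / (real d + 2))"
proof -
  define A where "A = Gamma ((real d + 1) / 2)"
  define B where "B = Gamma (real d / 2 + 1)"
  have "(real (Suc (Suc d)) + 1) / 2 = (real d + 1) / 2 + 1"
    and "real (Suc (Suc d)) / 2 + 1 = (real d / 2 + 1) + 1" by (simp_all add: field_simps)
  moreover have "(real d + 1) / 2 > 0" and "real d / 2 + 1 > 0" by simp_all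
  ultimately have "vol_ratio (Suc (Suc d)) = sqrt pi * ((real d + 1) / 2 * A / ((real d / 2 + 1) * B))"
    unfolding vol_ratio_def A_def B_def by (simp only: Gamma_plus1_pos)
  also have "\<dots> = sqrt pi * (A / B) * ((real d + 1) / (real d + 2))"
    by (simp add: field_split_simps)
  finally show ?thesis unfolding vol_ratio_def A_def B_def .
qed

lemma vol_ratio_2: "vol_ratio 2 = pi / 2"
proof -
  have "(real 2 + 1) / 2 = 1 / 2 + (1 :: real)" and "real 2 / 2 + 1 = 1 + (1 :: real)" by simp_all
  then have "vol_ratio 2 = sqrt pi * (1 / 2 * Gamma (1 / 2) / (1 * Gamma 1))"
    unfolding vol_ratio_def by (simp only: Gamma_plus1_pos zero_less_one divide_pos_pos)
  then show ?thesis by (simp add: Gamma_one_half_real)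
qed

lemma vol_ratio_3: "vol_ratio 3 = 4 / 3"
proof -
  have "vol_ratio 1 = 2"
  proof -
    have "(real 1 + 1) / 2 = (1 :: real)" and "real 1 / 2 + 1 = 1 / 2 + (1 :: real)" by simp_all
    then have "vol_ratio 1 = sqrt pi * (Gamma 1 / (1 / 2 * Gamma (1 / 2)))"
      unfolding vol_ratio_def by (simp only: Gamma_plus1_pos zero_less_one divide_pos_pos)
    then show ?thesis by (simp add: Gamma_one_half_real)
  qed
  then show ?thesis using vol_ratio_Suc_Suc[of 1] by (simp add: numeral_3_eq_3)
qed

lemma vol_ratio_add_even_le: "vol_ratio (d + 2 * m) \<le> vol_ratio d"
proof (induction m)
  case (Suc m)
  have "vol_ratio (d + 2 * Suc m) =
      vol_ratio (d + 2 * m) * ((real (d + 2 * m) + 1) / (real (d + 2 * m) + 2))"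
    using vol_ratio_Suc_Suc[of "d + 2 * m"] by (simp add: numeral_2_eq_2)
  also have "\<dots> \<le> vol_ratio (d + 2 * m)"
    using vol_ratio_pos[of "d + 2 * m"] by (intro mult_left_le) auto
  finally show ?case using Suc.IH by linarith
qed simp

lemma exists_even_odd_offset: "a \<le> d \<Longrightarrow> \<exists>m. d = a + 2 * m \<or> d = Suc a + 2 * m"
  by presburger

lemma vol_ratio_le_pi_half:
  assumes "d \<ge> 2" shows "vol_ratio d \<le> pi / 2"
proof -
  obtain m where "d = 2 + 2 * m \<or> d = 3 + 2 * m"
    using assms by (metis exists_even_odd_offset numeral_2_eq_2 numeral_3_eq_3)
  then show ?thesis
    using vol_ratio_add_even_le[of 2 m] vol_ratio_add_even_le[of 3 m] vol_ratio_2 vol_ratio_3 pi_gt3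
    by auto
qed

lemma vol_ratio_le_1:
  assumes "d \<ge> 6" shows "vol_ratio d \<le> 1"
proof -
  obtain m where "d = 6 + 2 * m \<or> d = 7 + 2 * m"
    using assms exists_even_odd_offset[of 6 d] by (auto simp: eval_nat_numeral)
  moreover have "vol_ratio 6 = 5 * pi / 16"
    using vol_ratio_Suc_Suc[of 2] vol_ratio_Suc_Suc[of 4] vol_ratio_2 by (simp add: eval_nat_numeral)
  moreover have "vol_ratio 7 = 32 / 35"
    using vol_ratio_Suc_Suc[of 3] vol_ratio_Suc_Suc[of 5] vol_ratio_3 by (simp add: eval_nat_numeral)
  ultimately show ?thesis
    using vol_ratio_add_even_le[of 6 m] vol_ratio_add_even_le[of 7 m] pi_less_4 pi_approx
    by auto
qed

section \<open>Column norms and the separation\<close>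

lemma col_norm_nonneg: "col_norm d v \<ge> 0"
  by (simp add: col_norm_def sum_nonneg)

lemma col_norm_cong: "(\<And>i. i < d \<Longrightarrow> v i = w i) \<Longrightarrow> col_norm d v = col_norm d w"
  by (simp add: col_norm_def)

lemma col_norm_mono: "n \<le> d \<Longrightarrow> col_norm n v \<le> col_norm d v"
  unfolding col_norm_def by (intro real_sqrt_le_mono sum_mono2) auto

lemma abs_le_col_norm: "i < d \<Longrightarrow> \<bar>v i\<bar> \<le> col_norm d v"
  unfolding col_norm_def
  by (metis real_sqrt_abs real_sqrt_le_mono member_le_sum zero_le_power2 finite_lessThan lessThan_iff)

lemma col_norm_Suc: "col_norm (Suc n) v = sqrt ((col_norm n v)\<^sup>2 + (v n)\<^sup>2)"
  by (simp add: col_norm_def sum_nonneg)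

lemma mod_eq_if_less_double: "k < 2 * m \<Longrightarrow> k mod m = (if k < m then k else k - (m::nat))"
  by (simp add: le_mod_geq)

lemma finite_off_diagonal_pairs: "finite {(k, k'). k < K \<and> k' < K \<and> k \<noteq> (k'::nat)}"
  by (rule finite_subset[of _ "{..<K} \<times> {..<K}"]) auto

lemma rho_ovo_eq_Min_image:
  "rho_ovo d K W = Min ((\<lambda>(k, k'). col_norm d (\<lambda>i. W k i - W k' i)) `
                          {(k, k'). k < K \<and> k' < K \<and> k \<noteq> k'})"
  unfolding rho_ovo_def by (rule arg_cong[where f = Min]) auto

lemma le_rho_ovo:
  assumes "K \<ge> 2"
    and "\<And>k k'. k < K \<Longrightarrow> k' < K \<Longrightarrow> k \<noteq> k' \<Longrightarrow> t \<le> col_norm d (\<lambda>i. W k i - W k' i)"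
  shows "t \<le> rho_ovo d K W"
proof -
  have "(0, 1) \<in> {(k, k'). k < K \<and> k' < K \<and> k \<noteq> (k'::nat)}"
    using assms(1) by auto
  then show ?thesis
    unfolding rho_ovo_eq_Min_image using finite_off_diagonal_pairs assms(2)
    by (subst Min_ge_iff) auto
qed

section \<open>Separated points in a Euclidean ball\<close>

lemma distr_PiM_lborel_translate:
  assumes "finite I"
  shows "distr (PiM I (\<lambda>_. lborel)) (PiM I (\<lambda>_. lborel)) (\<lambda>x. \<lambda>i\<in>I. x i - c i)
         = PiM I (\<lambda>_. lborel :: real measure)"
proof -
  interpret product_sigma_finite "\<lambda>_. lborel :: real measure" by standard
  let ?M = "PiM I (\<lambda>_. lborel :: real measure)" and ?T = "\<lambda>x. \<lambda>i\<in>I. x i - c i"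
  have meas: "?T \<in> measurable ?M ?M" by measurable
  show ?thesis
  proof (rule PiM_eqI[OF assms])
    fix A :: "'a \<Rightarrow> real set"
    assume A: "\<And>i. i \<in> I \<Longrightarrow> A i \<in> sets lborel"
    have shift_sets: "(\<lambda>t. t - c i) -` A i \<in> sets lborel" if "i \<in> I" for i
      using measurable_sets[of "\<lambda>t::real. t - c i" borel borel, OF _ A[OF that, simplified]] by simp
    have shift_measure: "emeasure lborel ((\<lambda>t. t - c i) -` A i) = emeasure lborel (A i)"
      if "i \<in> I" for i
    proof -
      have "emeasure lborel (A i) = emeasure (distr lborel borel ((+) (- c i))) (A i)"
        by (simp add: lborel_distr_plus)
      also have "\<dots> = emeasure lborel ((+) (- c i) -` A i \<inter> space lborel)"
        using A[OF that] by (intro emeasure_distr) auto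
      also have "(+) (- c i) -` A i \<inter> space lborel = (\<lambda>t. t - c i) -` A i"
        by (auto simp: algebra_simps)
      finally show ?thesis by simp
    qed
    have "?T -` PiE I A \<inter> space ?M = PiE I (\<lambda>i. (\<lambda>t. t - c i) -` A i)"
      by (auto simp: space_PiM PiE_iff)
    then have "emeasure (distr ?M ?M ?T) (PiE I A) = emeasure ?M (PiE I (\<lambda>i. (\<lambda>t. t - c i) -` A i))"
      using A meas by (subst emeasure_distr) (auto intro!: sets_PiM_I_finite assms)
    also have "\<dots> = (\<Prod>i\<in>I. emeasure lborel ((\<lambda>t. t - c i) -` A i))"
      using shift_sets by (intro emeasure_PiM assms) auto
    also have "\<dots> = (\<Prod>i\<in>I. emeasure lborel (A i))"
      using shift_measure by (intro prod.cong) auto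
    finally show "emeasure (distr ?M ?M ?T) (PiE I A) = (\<Prod>i\<in>I. emeasure lborel (A i))" .
  qed simp
qed

lemma PiM_cball_sets:
  assumes "finite I"
  shows "{f. sqrt (\<Sum>i\<in>I. (f i - c i)\<^sup>2) \<le> r} \<inter> space (PiM I (\<lambda>_. lborel :: real measure))
     \<in> sets (PiM I (\<lambda>_. lborel))"
proof -
  have "{f \<in> space (PiM I (\<lambda>_. lborel :: real measure)). sqrt (\<Sum>i\<in>I. (f i - c i)\<^sup>2) \<le> r}
     \<in> sets (PiM I (\<lambda>_. lborel))"
    using assms by measurable
  then show ?thesis by (simp add: Collect_conj_eq Int_commute Collect_mem_eq)
qed

lemma emeasure_PiM_cball:
  assumes "finite I" and "r > 0"
  shows "emeasure (PiM I (\<lambda>_. lborel))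
     ({f. sqrt (\<Sum>i\<in>I. (f i - c i)\<^sup>2) \<le> r} \<inter> space (PiM I (\<lambda>_. lborel)))
     = ennreal (unit_ball_vol (real (card I)) * r ^ card I)"
proof -
  let ?M = "PiM I (\<lambda>_. lborel :: real measure)" and ?T = "\<lambda>x. \<lambda>i\<in>I. x i - c i"
  let ?B = "{f. sqrt (\<Sum>i\<in>I. (f i)\<^sup>2) \<le> r} \<inter> space ?M"
  have meas: "?T \<in> measurable ?M ?M" by measurable
  have "ennreal (unit_ball_vol (real (card I)) * r ^ card I) = emeasure ?M ?B"
    using emeasure_cball_aux[OF assms] by simp
  also have "\<dots> = emeasure (distr ?M ?M ?T) ?B"
    by (simp add: distr_PiM_lborel_translate[OF assms(1)])
  also have "\<dots> = emeasure ?M (?T -` ?B \<inter> space ?M)"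
    using PiM_cball_sets[OF assms(1), of "\<lambda>_. 0" r] meas by (intro emeasure_distr) auto
  also have "?T -` ?B \<inter> space ?M = {f. sqrt (\<Sum>i\<in>I. (f i - c i)\<^sup>2) \<le> r} \<inter> space ?M"
    by (auto simp: space_PiM PiE_iff)
  finally show ?thesis by simp
qed

lemma exists_point_far_from_centres:
  fixes p :: "nat \<Rightarrow> nat \<Rightarrow> real"
  assumes "\<delta> > 0" and "r > 0" and "real K * \<delta> ^ n \<le> r ^ n" and "j < K"
  shows "\<exists>y. col_norm n y \<le> r \<and> (\<forall>k<j. \<delta> < col_norm n (\<lambda>i. y i - p k i))"
proof (rule ccontr)
  assume not_far: "\<not> ?thesis"
  let ?M = "PiM {..<n} (\<lambda>_. lborel :: real measure)"
  define B where "B c s = {f. sqrt (\<Sum>i\<in>{..<n}. (f i - c i)\<^sup>2) \<le> s} \<inter> space ?M" for c s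
  define v where "v = unit_ball_vol (real n)"
  have v: "v > 0" unfolding v_def by simp
  have B_sets: "B c s \<in> sets ?M" for c s
    unfolding B_def by (rule PiM_cball_sets) simp
  have B_measure: "emeasure ?M (B c s) = ennreal (v * s ^ n)" if "s > 0" for c s
    unfolding B_def v_def using emeasure_PiM_cball[of "{..<n}" s c] that by simp
  have "B (\<lambda>_. 0) r \<subseteq> (\<Union>k<j. B (p k) \<delta>)"
  proof
    fix f assume f: "f \<in> B (\<lambda>_. 0) r"
    then have "col_norm n f \<le> r" by (simp add: B_def col_norm_def)
    with not_far obtain k where "k < j" and "col_norm n (\<lambda>i. f i - p k i) \<le> \<delta>"
      by (auto simp: not_less)
    with f show "f \<in> (\<Union>k<j. B (p k) \<delta>)" by (auto simp: B_def col_norm_def)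
  qed
  then have "emeasure ?M (B (\<lambda>_. 0) r) \<le> emeasure ?M (\<Union>k<j. B (p k) \<delta>)"
    by (rule emeasure_mono) (use B_sets in auto)
  then have "ennreal (v * r ^ n) \<le> emeasure ?M (\<Union>k<j. B (p k) \<delta>)"
    by (simp only: B_measure[OF \<open>r > 0\<close>])
  also have "\<dots> \<le> (\<Sum>k<j. emeasure ?M (B (p k) \<delta>))"
    using B_sets by (intro emeasure_subadditive_finite) auto
  also have "\<dots> = ennreal (real j * (v * \<delta> ^ n))"
    using B_measure[OF \<open>\<delta> > 0\<close>] v \<open>\<delta> > 0\<close> by (simp add: ennreal_of_nat_eq_real_of_nat ennreal_mult)
  finally have "v * r ^ n \<le> real j * (v * \<delta> ^ n)"
    using v \<open>\<delta> > 0\<close> by (subst (asm) ennreal_le_iff) auto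
  also have "\<dots> < real K * (v * \<delta> ^ n)"
    using v \<open>\<delta> > 0\<close> \<open>j < K\<close> by (intro mult_strict_right_mono) auto
  also have "\<dots> \<le> v * r ^ n"
    using assms(3) v by (simp add: mult.left_commute)
  finally show False by simp
qed

lemma exists_separated_points_in_ball:
  assumes "\<delta> > 0" and "r > 0" and "real K * \<delta> ^ n \<le> r ^ n"
  shows "\<exists>p. (\<forall>k<K. col_norm n (p k) \<le> r) \<and>
             (\<forall>k<K. \<forall>k'<K. k \<noteq> k' \<longrightarrow> \<delta> \<le> col_norm n (\<lambda>i. p k i - p k' i))"
proof -
  have col_norm_commute: "col_norm n (\<lambda>i. x i - y i) = col_norm n (\<lambda>i. y i - x i)" for x y
    unfolding col_norm_def by (simp add: power2_commute)
  have "\<exists>p. (\<forall>k<j. col_norm n (p k) \<le> r) \<and>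
             (\<forall>k<j. \<forall>k'<j. k \<noteq> k' \<longrightarrow> \<delta> \<le> col_norm n (\<lambda>i. p k i - p k' i))"
    if "j \<le> K" for j
    using that
  proof (induction j)
    case (Suc j)
    then obtain p where p_ball: "\<forall>k<j. col_norm n (p k) \<le> r"
      and p_sep: "\<forall>k<j. \<forall>k'<j. k \<noteq> k' \<longrightarrow> \<delta> \<le> col_norm n (\<lambda>i. p k i - p k' i)"
      by auto
    obtain y where "col_norm n y \<le> r" and "\<forall>k<j. \<delta> < col_norm n (\<lambda>i. y i - p k i)"
      using exists_point_far_from_centres[OF assms, of j p] Suc.prems by auto
    then show ?case
      using p_ball p_sep col_norm_commute
      by (intro exI[of _ "p(j := y)"]) (auto simp: less_Suc_eq less_imp_le)
  qed simp
  then show ?thesis by blast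
qed

section \<open>Separated columns on the sphere\<close>

lemma cross_polytope_separated:
  assumes "K \<ge> 2" and "K \<le> 2 * d"
  shows "\<exists>W\<in>OB d K. 1 \<le> rho_ovo d K W"
proof -
  have "d > 0" using assms by linarith
  define W where "W k i = (if k < K \<and> i = k mod d then if k < d then 1 else -1 else 0 :: real)" for k i
  have "col_norm d (W k) = 1" if "k < K" for k
  proof -
    have "(\<Sum>i<d. (W k i)\<^sup>2) = (\<Sum>i<d. if i = k mod d then 1 else 0)"
      using that by (intro sum.cong) (auto simp: W_def)
    also have "\<dots> = 1" using \<open>d > 0\<close> by simp
    finally show ?thesis by (simp add: col_norm_def)
  qed
  moreover have "W k i = 0" if "K \<le> k \<or> d \<le> i" for k i
    using that mod_less_divisor[OF \<open>d > 0\<close>, of k] by (auto simp: W_def)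
  ultimately have "W \<in> OB d K"
    by (simp add: OB_def)
  moreover have "1 \<le> rho_ovo d K W"
  proof (rule le_rho_ovo[OF \<open>K \<ge> 2\<close>])
    fix k k' assume k: "k < K" "k' < K" "k \<noteq> k'"
    define a where "a = k mod d"
    have "a < d" using \<open>d > 0\<close> by (simp add: a_def)
    have "k' mod d = a \<Longrightarrow> (k < d) \<noteq> (k' < d)"
      using mod_eq_if_less_double[of k d] mod_eq_if_less_double[of k' d] k assms(2)
      unfolding a_def by (auto split: if_splits)
    then have "1 \<le> \<bar>W k a - W k' a\<bar>"
      using k by (auto simp: W_def a_def)
    also have "\<dots> \<le> col_norm d (\<lambda>i. W k i - W k' i)"
      using abs_le_col_norm[OF \<open>a < d\<close>] .
    finally show "1 \<le> col_norm d (\<lambda>i. W k i - W k' i)" .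
  qed
  ultimately show ?thesis by blast
qed

definition sphere_lift ::
    "nat \<Rightarrow> nat \<Rightarrow> (nat \<Rightarrow> nat \<Rightarrow> real) \<Rightarrow> (nat \<Rightarrow> real) \<Rightarrow> nat \<Rightarrow> nat \<Rightarrow> real" where
  "sphere_lift n K p \<sigma> k i =
     (if k < K \<and> i < n then p k i
      else if k < K \<and> i = n then \<sigma> k * sqrt (1 - (col_norm n (p k))\<^sup>2) else 0)"

lemma sphere_lift_in_OB:
  assumes "\<forall>k<K. col_norm n (p k) \<le> 1" and "\<forall>k. \<sigma> k = 1 \<or> \<sigma> k = -1"
  shows "sphere_lift n K p \<sigma> \<in> OB (Suc n) K"
proof -
  have "col_norm (Suc n) (sphere_lift n K p \<sigma> k) = 1" if "k < K" for k
  proof -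
    have "(col_norm n (p k))\<^sup>2 \<le> 1"
      using assms(1) that col_norm_nonneg[of n "p k"] by (simp add: abs_square_le_1)
    moreover have "(\<sigma> k)\<^sup>2 = 1"
      using assms(2)[rule_format, of k] by auto
    moreover have "col_norm n (sphere_lift n K p \<sigma> k) = col_norm n (p k)"
      using that by (intro col_norm_cong) (simp add: sphere_lift_def)
    ultimately show ?thesis
      using that by (simp add: col_norm_Suc sphere_lift_def power_mult_distrib)
  qed
  then show ?thesis by (auto simp: OB_def sphere_lift_def)
qed

lemma sphere_lift_separated:
  assumes "K \<ge> 2" and "r \<le> 1" and ball: "\<forall>k<K. col_norm n (p k) \<le> r"
    and sign: "\<forall>k. \<sigma> k = 1 \<or> \<sigma> k = -1"
    and same_sign: "\<forall>k<K. \<forall>k'<K. k \<noteq> k' \<and> \<sigma> k = \<sigma> k' \<longrightarrow>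
                      \<delta> \<le> col_norm n (\<lambda>i. p k i - p k' i)"
    and opposite_sign: "\<forall>k<K. \<forall>k'<K. \<sigma> k \<noteq> \<sigma> k' \<longrightarrow> \<delta> \<le> 2 * sqrt (1 - r\<^sup>2)"
  shows "\<delta> \<le> rho_ovo (Suc n) K (sphere_lift n K p \<sigma>)"
proof (rule le_rho_ovo[OF \<open>K \<ge> 2\<close>])
  fix k k' assume k: "k < K" "k' < K" "k \<noteq> k'"
  let ?L = "sphere_lift n K p \<sigma>"
  define h where "h j = sqrt (1 - (col_norm n (p j))\<^sup>2)" for j
  have "0 \<le> r"
    using ball col_norm_nonneg[of n "p 0"] \<open>K \<ge> 2\<close> by (meson order_trans pos2 less_le_trans)
  then have "0 \<le> sqrt (1 - r\<^sup>2)"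
    using \<open>r \<le> 1\<close> by (simp add: power_le_one)
  have h_ge: "sqrt (1 - r\<^sup>2) \<le> h j" if "j < K" for j
  proof -
    have "(col_norm n (p j))\<^sup>2 \<le> r\<^sup>2"
      using ball that col_norm_nonneg[of n "p j"] by (intro power_mono) auto
    then show ?thesis unfolding h_def by simp
  qed
  show "\<delta> \<le> col_norm (Suc n) (\<lambda>i. ?L k i - ?L k' i)"
  proof (cases "\<sigma> k = \<sigma> k'")
    case True
    have "\<delta> \<le> col_norm n (\<lambda>i. p k i - p k' i)"
      using same_sign k True by blast
    also have "\<dots> = col_norm n (\<lambda>i. ?L k i - ?L k' i)"
      using k by (intro col_norm_cong) (simp add: sphere_lift_def)
    also have "\<dots> \<le> col_norm (Suc n) (\<lambda>i. ?L k i - ?L k' i)"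
      by (rule col_norm_mono) simp
    finally show ?thesis .
  next
    case False
    then have "\<sigma> k' = - \<sigma> k" and "\<bar>\<sigma> k\<bar> = 1"
      using sign[rule_format, of k] sign[rule_format, of k'] by auto
    then have "?L k n - ?L k' n = \<sigma> k * (h k + h k')"
      using k unfolding sphere_lift_def h_def by (simp add: algebra_simps)
    then have height: "h k + h k' = \<bar>?L k n - ?L k' n\<bar>"
      using \<open>\<bar>\<sigma> k\<bar> = 1\<close> order_trans[OF \<open>0 \<le> sqrt (1 - r\<^sup>2)\<close> h_ge] k
      by (simp add: abs_mult)
    have "\<delta> \<le> 2 * sqrt (1 - r\<^sup>2)"
      using opposite_sign k False by blast
    also have "\<dots> \<le> h k + h k'"
      using add_mono[OF h_ge h_ge] k by simp
    also have "\<dots> = \<bar>?L k n - ?L k' n\<bar>"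
      by (rule height)
    also have "\<dots> \<le> col_norm (Suc n) (\<lambda>i. ?L k i - ?L k' i)"
      using abs_le_col_norm[of n "Suc n" "\<lambda>i. ?L k i - ?L k' i"] by simp
    finally show ?thesis .
  qed
qed

lemma exists_OB_from_ball_packing:
  assumes "K \<ge> 2" and "\<forall>k<K. col_norm n (p k) \<le> 1"
    and "\<forall>k<K. \<forall>k'<K. k \<noteq> k' \<longrightarrow> \<delta> \<le> col_norm n (\<lambda>i. p k i - p k' i)"
  shows "\<exists>W\<in>OB (Suc n) K. \<delta> \<le> rho_ovo (Suc n) K W"
  using sphere_lift_in_OB[of K n p "\<lambda>_. 1"] sphere_lift_separated[of K 1 n p "\<lambda>_. 1" \<delta>] assms
  by auto

lemma exists_OB_from_half_ball_packing:
  assumes "K \<ge> 2" and "K \<le> 2 * M" and "r \<le> 1" and "\<delta> \<le> 2 * sqrt (1 - r\<^sup>2)"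
    and ball: "\<forall>k<M. col_norm n (p k) \<le> r"
    and sep: "\<forall>k<M. \<forall>k'<M. k \<noteq> k' \<longrightarrow> \<delta> \<le> col_norm n (\<lambda>i. p k i - p k' i)"
  shows "\<exists>W\<in>OB (Suc n) K. \<delta> \<le> rho_ovo (Suc n) K W"
proof -
  have "M > 0" using assms(1,2) by linarith
  define q where "q k = p (k mod M)" for k
  define \<sigma> where "\<sigma> k = (if k < M then 1 else -1 :: real)" for k
  have q_ball: "\<forall>k<K. col_norm n (q k) \<le> r"
    using ball mod_less_divisor[OF \<open>M > 0\<close>] by (simp add: q_def)
  moreover have "\<forall>k<K. \<forall>k'<K. k \<noteq> k' \<and> \<sigma> k = \<sigma> k' \<longrightarrow>
                   \<delta> \<le> col_norm n (\<lambda>i. q k i - q k' i)"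
  proof (intro allI impI)
    fix k k' assume k: "k < K" "k' < K" "k \<noteq> k' \<and> \<sigma> k = \<sigma> k'"
    then have "(k < M) = (k' < M)" by (auto simp: \<sigma>_def split: if_splits)
    then have "k mod M \<noteq> k' mod M"
      using mod_eq_if_less_double[of k M] mod_eq_if_less_double[of k' M] k assms(2) by auto
    then show "\<delta> \<le> col_norm n (\<lambda>i. q k i - q k' i)"
      using sep mod_less_divisor[OF \<open>M > 0\<close>] by (simp add: q_def)
  qed
  moreover have "\<forall>k. \<sigma> k = 1 \<or> \<sigma> k = -1"
    by (simp add: \<sigma>_def)
  moreover have "\<forall>k<K. col_norm n (q k) \<le> 1"
    using q_ball \<open>r \<le> 1\<close> by auto
  ultimately show ?thesis
    using sphere_lift_in_OB[of K n q \<sigma>] sphere_lift_separated[of K r n q \<sigma> \<delta>] q_ball assms(1,3,4)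
    by blast
qed

lemma two_hemisphere_budget:
  assumes "1 \<le> n" and "n \<le> 4" and "2 * n + 3 \<le> K" and "\<delta> > 0"
    and \<delta>: "\<delta> ^ n = vol_ratio (Suc n) / real K"
  shows "real ((K + 1) div 2) * \<delta> ^ n \<le> sqrt (1 - \<delta>\<^sup>2 / 4) ^ n"
proof -
  define c where "c = vol_ratio (Suc n)"
  have "c > 0" unfolding c_def by (rule vol_ratio_pos)
  have "real (2 * n + 3) \<le> real K" using assms(3) by linarith
  then have \<delta>_small: "\<delta> ^ n \<le> c / (2 * n + 3)"
    using \<delta> \<open>c > 0\<close> unfolding c_def by (simp add: frac_le)
  have "vol_ratio 4 = 3 * pi / 8" and "vol_ratio 5 = 16 / 15"
    using vol_ratio_Suc_Suc[of 2] vol_ratio_Suc_Suc[of 3] vol_ratio_2 vol_ratio_3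
    by (simp_all add: eval_nat_numeral)
  have budget: "c * (n + 2) / (2 * n + 3) + \<delta>\<^sup>2 / 2 \<le> 1"
  proof -
    have "n = 1 \<or> n = 2 \<or> n = 3 \<or> n = 4" using assms(1,2) by linarith
    then consider "n = 1" "c = pi / 2" | "n = 2" "c = 4 / 3" | "n = 3" "c = 3 * pi / 8" | "n = 4" "c = 16 / 15"
      using vol_ratio_2 vol_ratio_3 \<open>vol_ratio 4 = _\<close> \<open>vol_ratio 5 = _\<close>
      unfolding c_def by (auto simp: eval_nat_numeral)
    then show ?thesis
    proof cases
      case 1
      then have "\<delta> \<le> 0.32" using \<delta>_small pi_approx by simp
      then have "\<delta>\<^sup>2 \<le> 0.32\<^sup>2" using \<open>\<delta> > 0\<close> by (intro power_mono) auto
      then show ?thesis using 1 pi_approx by (simp add: power2_eq_square)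
    next
      case 2
      then show ?thesis using \<delta>_small by simp
    next
      case 3
      then have "\<delta> ^ 3 < 0.8 ^ 3" using \<delta>_small pi_approx by (simp add: power_divide)
      then have "\<delta> < 0.8" by (rule power_less_imp_less_base) simp
      then have "\<delta>\<^sup>2 < 0.8\<^sup>2" using \<open>\<delta> > 0\<close> by (intro power_strict_mono) auto
      then show ?thesis using 3 pi_approx by (simp add: power2_eq_square)
    next
      case 4
      then have "\<delta> ^ 4 < 0.8 ^ 4" using \<delta>_small by (simp add: power_divide)
      then have "\<delta> < 0.8" by (rule power_less_imp_less_base) simp
      then have "\<delta>\<^sup>2 < 0.8\<^sup>2" using \<open>\<delta> > 0\<close> by (intro power_strict_mono) auto
      then show ?thesis using 4 by (simp add: power2_eq_square)
    qed
  qed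
  have "0 \<le> c * (n + 2) / (2 * n + 3)" using \<open>c > 0\<close> by simp
  then have "\<delta>\<^sup>2 \<le> 2" using budget by linarith
  have "real (2 * ((K + 1) div 2)) \<le> real (K + 1)" by (simp only: of_nat_le_iff)
  then have "real ((K + 1) div 2) \<le> (real K + 1) / 2" by simp
  then have "real ((K + 1) div 2) * \<delta> ^ n \<le> (real K + 1) / 2 * \<delta> ^ n"
    using \<open>\<delta> > 0\<close> by (intro mult_right_mono) auto
  also have "\<dots> = (real K + 1) / 2 * (c / real K)"
    using \<delta> by (simp add: c_def)
  also have "\<dots> \<le> c * (n + 2) / (2 * n + 3)"
    using mult_left_mono[OF \<open>real (2 * n + 3) \<le> real K\<close>, of c] \<open>c > 0\<close> assms(3)
    by (simp add: field_simps)
  also have "\<dots> \<le> 1 - \<delta>\<^sup>2 / 2" using budget by linarith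
  also have "\<dots> \<le> 1 - \<delta>\<^sup>2 / 2 + (\<delta>\<^sup>2 / 4)\<^sup>2" by simp
  also have "\<dots> = (1 - \<delta>\<^sup>2 / 4)\<^sup>2" by (simp add: power2_diff field_simps)
  also have "\<dots> = (sqrt (1 - \<delta>\<^sup>2 / 4) ^ 2) ^ 2"
    using \<open>\<delta>\<^sup>2 \<le> 2\<close> by simp
  also have "\<dots> = sqrt (1 - \<delta>\<^sup>2 / 4) ^ 4"
    by (simp flip: power_mult)
  also have "\<dots> \<le> sqrt (1 - \<delta>\<^sup>2 / 4) ^ n"
    using \<open>\<delta>\<^sup>2 \<le> 2\<close> \<open>n \<le> 4\<close> by (intro power_decreasing) auto
  finally show ?thesis .
qed

lemma exists_OB_separated:
  assumes "n \<ge> 1" and "K \<ge> 2" and "\<delta> > 0" and \<delta>: "\<delta> ^ n = vol_ratio (Suc n) / real K"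
  shows "\<exists>W\<in>OB (Suc n) K. \<delta> \<le> rho_ovo (Suc n) K W"
proof -
  have "vol_ratio (Suc n) / real K \<le> (pi / 2) / 2"
    using vol_ratio_le_pi_half[of "Suc n"] vol_ratio_pos[of "Suc n"] assms(1,2)
    by (intro frac_le) auto
  then have "\<delta> ^ n < 1" using \<delta> pi_less_4 by linarith
  then have "\<delta> < 1" using one_le_power[of \<delta> n] by linarith
  consider "K \<le> 2 * Suc n" | "Suc n \<ge> 6" | "n \<le> 4" and "2 * n + 3 \<le> K"
    by (cases "K \<le> 2 * Suc n"; cases "Suc n \<ge> 6") auto
  then show ?thesis
  proof cases
    case 1
    then obtain W where "W \<in> OB (Suc n) K" and "1 \<le> rho_ovo (Suc n) K W"
      using cross_polytope_separated[OF \<open>K \<ge> 2\<close>] by blast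
    then show ?thesis
      using \<open>\<delta> < 1\<close> by (intro bexI[of _ W]) auto
  next
    case 2
    then have "real K * \<delta> ^ n \<le> 1 ^ n"
      using \<delta> vol_ratio_le_1[of "Suc n"] assms(2) by simp
    then obtain p where "\<forall>k<K. col_norm n (p k) \<le> 1"
      and "\<forall>k<K. \<forall>k'<K. k \<noteq> k' \<longrightarrow> \<delta> \<le> col_norm n (\<lambda>i. p k i - p k' i)"
      using exists_separated_points_in_ball[OF \<open>\<delta> > 0\<close> zero_less_one] by blast
    then show ?thesis
      by (rule exists_OB_from_ball_packing[OF \<open>K \<ge> 2\<close>])
  next
    case 3
    define r where "r = sqrt (1 - \<delta>\<^sup>2 / 4)"
    have "\<delta>\<^sup>2 < 1" using \<open>\<delta> < 1\<close> \<open>\<delta> > 0\<close> by (simp add: power_less_one_iff)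
    then have "r > 0" and "r \<le> 1" and "\<delta> \<le> 2 * sqrt (1 - r\<^sup>2)"
      using \<open>\<delta> > 0\<close> by (simp_all add: r_def real_sqrt_divide)
    moreover have "real ((K + 1) div 2) * \<delta> ^ n \<le> r ^ n"
      unfolding r_def using two_hemisphere_budget[OF assms(1) 3 \<open>\<delta> > 0\<close> \<delta>] .
    ultimately obtain p where "\<forall>k<(K + 1) div 2. col_norm n (p k) \<le> r"
      and "\<forall>k<(K + 1) div 2. \<forall>k'<(K + 1) div 2. k \<noteq> k' \<longrightarrow> \<delta> \<le> col_norm n (\<lambda>i. p k i - p k' i)"
      using exists_separated_points_in_ball[OF \<open>\<delta> > 0\<close> \<open>r > 0\<close>] by blast
    moreover have "K \<le> 2 * ((K + 1) div 2)" by simp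
    ultimately show ?thesis
      by (intro exists_OB_from_half_ball_packing[OF \<open>K \<ge> 2\<close> _ \<open>r \<le> 1\<close>
            \<open>\<delta> \<le> 2 * sqrt (1 - r\<^sup>2)\<close>])
  qed
qed

section \<open>Existence of a maximiser\<close>

lemma continuous_on_entry [continuous_intros]:
  "continuous_on S (\<lambda>W :: 'a \<Rightarrow> 'b \<Rightarrow> 'c::topological_space. W k i)"
  using continuous_on_product_then_coordinatewise[OF continuous_on_product_coordinates, of k i]
  by (rule continuous_on_subset) simp

lemma compact_PiE_UNIV:
  fixes S :: "'a \<Rightarrow> 'b::topological_space set"
  assumes "\<And>i. compact (S i)"
  shows "compact (PiE UNIV S)"
  using assms compactin_PiE[of "\<lambda>_. euclidean" UNIV S]
  by (simp add: euclidean_product_topology)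

lemma continuous_on_Min_image:
  fixes f :: "'p \<Rightarrow> 'a::topological_space \<Rightarrow> 'b::linorder_topology"
  assumes "finite P" and "\<And>p. p \<in> P \<Longrightarrow> continuous_on S (f p)"
  shows "continuous_on S (\<lambda>x. Min ((\<lambda>p. f p x) ` P))"
  using assms
proof (induction P rule: finite_induct)
  case (insert p P)
  show ?case
  proof (cases "P = {}")
    case False
    then have "Min ((\<lambda>q. f q x) ` insert p P) = min (f p x) (Min ((\<lambda>q. f q x) ` P))" for x
      using insert.hyps(1) by (simp add: Min_insert)
    then show ?thesis using insert by (simp add: continuous_on_min)
  qed (use insert in simp)
qed simp

lemma OB_entry_bound:
  assumes "W \<in> OB d K" shows "\<bar>W k i\<bar> \<le> 1"
proof (cases "k < K \<and> i < d")
  case True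
  then have "(W k i)\<^sup>2 \<le> (\<Sum>j<d. (W k j)\<^sup>2)" by (intro member_le_sum) auto
  also have "\<dots> = 1" using assms True by (simp add: OB_def col_norm_def)
  finally show ?thesis by (simp add: abs_square_le_1)
qed (use assms in \<open>auto simp: OB_def\<close>)

lemma compact_OB: "compact (OB d K)"
proof -
  define box where "box = PiE UNIV (\<lambda>k. PiE UNIV (\<lambda>i. if k < K \<and> i < d then {-1..1} else {0::real}))"
  have "compact box"
    unfolding box_def by (intro compact_PiE_UNIV) auto
  moreover have "OB d K \<subseteq> box"
  proof
    fix W assume W: "W \<in> OB d K"
    have "W k i \<in> (if k < K \<and> i < d then {-1..1} else {0})" for k i
      using OB_entry_bound[OF W, of k i] W by (auto simp: OB_def abs_le_iff)
    then show "W \<in> box" by (simp add: box_def PiE_iff)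
  qed
  moreover have "OB d K = (\<Inter>k<K. {W. col_norm d (W k) = 1}) \<inter>
      (\<Inter>(k, i)\<in>{(k, i). K \<le> k \<or> d \<le> i}. {W. W k i = 0})"
    by (auto simp: OB_def)
  then have "closed (OB d K)"
    unfolding col_norm_def by (auto intro!: closed_Int closed_INT closed_Collect_eq continuous_intros)
  ultimately show ?thesis by (metis compact_Int_closed inf.absorb2)
qed

lemma continuous_on_rho_ovo: "continuous_on S (rho_ovo d K)"
  unfolding rho_ovo_eq_Min_image[abs_def] col_norm_def
  by (intro continuous_on_Min_image finite_off_diagonal_pairs) (auto intro!: continuous_intros)

lemma rho_ovo_attains_max:
  assumes "OB d K \<noteq> {}"
  shows "\<exists>W\<in>OB d K. \<forall>W'\<in>OB d K. rho_ovo d K W' \<le> rho_ovo d K W"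
  using continuous_attains_sup[OF compact_OB assms continuous_on_rho_ovo] .

theorem mainTheorem16:
  fixes d K :: nat
  assumes "d \<ge> 2" and "K \<ge> 2"
  shows "\<exists>W\<in>OB d K. (\<forall>W'\<in>OB d K. rho_ovo d K W' \<le> rho_ovo d K W) \<and>
           (sqrt pi / real K * (Gamma ((real d + 1) / 2) / Gamma (real d / 2 + 1)))
              powr (1 / (real d - 1)) \<le> rho_ovo d K W"
proof -
  define n where "n = d - 1"
  have d: "d = Suc n" and "n \<ge> 1" using assms(1) by (auto simp: n_def)
  define x where "x = vol_ratio d / real K"
  have "x > 0" using vol_ratio_pos[of d] assms(2) by (simp add: x_def)
  have x: "sqrt pi / real K * (Gamma ((real d + 1) / 2) / Gamma (real d / 2 + 1)) = x"
    by (simp add: x_def vol_ratio_def)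
  define \<delta> where "\<delta> = x powr (1 / real n)"
  have "\<delta> > 0" using \<open>x > 0\<close> by (simp add: \<delta>_def)
  have "\<delta> ^ n = x" using \<open>x > 0\<close> \<open>n \<ge> 1\<close> by (simp add: \<delta>_def powr_powr flip: powr_realpow)
  then obtain W0 where "W0 \<in> OB d K" and "\<delta> \<le> rho_ovo d K W0"
    using exists_OB_separated[OF \<open>n \<ge> 1\<close> assms(2) \<open>\<delta> > 0\<close>] by (auto simp: x_def d)
  moreover obtain W where "W \<in> OB d K" and W: "\<forall>W'\<in>OB d K. rho_ovo d K W' \<le> rho_ovo d K W"
    using rho_ovo_attains_max \<open>W0 \<in> OB d K\<close> by blast
  ultimately show ?thesis
    using x d by (auto simp: \<delta>_def intro!: bexI[of _ W] order_trans[OF _ W[rule_format]])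
qed

end
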